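(* Let $\Gamma$ be a metrized graph that is a tree with $v \geq 5$ vertices, and let $k$ be an integer with $1 \leq k \leq v-4$. Then $$W(\Gamma)= \frac{(v-4-k)!}{(v-4)!}\sum_{e_{i_1} \in E(\Gamma)} \sum_{e_{i_2} \in E(\overline{\Gamma}_{i_1})}\cdots\sum_{e_{i_k} \in E(\overline{\Gamma}_{i_1, \dots, i_{k-1}})} W(\overline{\Gamma}_{i_1,\dots, i_k}) -\frac{\big(v^2-(k+2)v+k-1 \big)k}{(v-k-2)(v-k-3) }\,\ell(\Gamma).$$ In particular, for $k=v-4$, $$W(\Gamma)= \frac{1}{(v-4)!}\sum_{e_{i_1} \in E(\Gamma)}\cdots\sum_{e_{i_{v-4}} \in E(\overline{\Gamma}_{i_1, \dots, i_{v-5}})} W(\overline{\Gamma}_{i_1,\dots, i_{v-4}}) -\frac{(3v-5)(v-4)}{2}\,\ell(\Gamma).$$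
   Context: A metrized graph is a finite connected graph each of whose edges is identified with a closed segment of positive length; its vertex set $V(\Gamma)$ is a finite nonempty set containing every point of valence $\neq 2$, $v=\#V(\Gamma)$, and $E(\Gamma)$ is its edge set. $\ell(\Gamma)$ is the total length. The Wiener index is $W(\Gamma)=\frac12\sum_{p,q\in V(\Gamma)}d(p,q)$ with $d$ the path distance. $\overline\Gamma_{i_1,\dots,i_k}$ is the tree obtained by successively contracting to a point the edge $e_{i_1}\in E(\Gamma)$, then $e_{i_2}\in E(\overline\Gamma_{i_1})$, and so on, with vertex sets the images of $V(\Gamma)$; the sums run over all such ordered choices of edges. *)

theory Defs
  imports Main "HOL.Real"
begin

text \<open>A metrized graph, modelled combinatorially: a finite vertex set, a finite set of
edge labels, each edge having a pair of endpoints and a positive length.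
(Multiple edges and loops are allowed by the data structure.)\<close>

record ('a, 'e) mgraph =
  verts :: "'a set"
  edges :: "'e set"
  ends  :: "'e \<Rightarrow> 'a \<times> 'a"
  len   :: "'e \<Rightarrow> real"

definition wf_mgraph :: "('a, 'e) mgraph \<Rightarrow> bool" where
  "wf_mgraph G \<longleftrightarrow> finite (verts G) \<and> verts G \<noteq> {} \<and> finite (edges G) \<and>
     (\<forall>e\<in>edges G. fst (ends G e) \<in> verts G \<and> snd (ends G e) \<in> verts G \<and> len G e > 0)"

inductive walk :: "('a, 'e) mgraph \<Rightarrow> 'a \<Rightarrow> 'e list \<Rightarrow> 'a \<Rightarrow> bool" for G where
  walk_Nil: "p \<in> verts G \<Longrightarrow> walk G p [] p"
| walk_Cons1: "e \<in> edges G \<Longrightarrow> ends G e = (p, r) \<Longrightarrow> walk G r es q \<Longrightarrow> walk G p (e # es) q"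
| walk_Cons2: "e \<in> edges G \<Longrightarrow> ends G e = (r, p) \<Longrightarrow> walk G r es q \<Longrightarrow> walk G p (e # es) q"

definition connected_mg :: "('a, 'e) mgraph \<Rightarrow> bool" where
  "connected_mg G \<longleftrightarrow> (\<forall>p\<in>verts G. \<forall>q\<in>verts G. \<exists>es. walk G p es q)"

text \<open>Acyclic: no nonempty closed walk using pairwise distinct edges (this excludes loops and
multiple edges as well as longer cycles).\<close>

definition acyclic_mg :: "('a, 'e) mgraph \<Rightarrow> bool" where
  "acyclic_mg G \<longleftrightarrow> \<not> (\<exists>p es. es \<noteq> [] \<and> distinct es \<and> walk G p es p)"

definition is_metrized_tree :: "('a, 'e) mgraph \<Rightarrow> bool" where
  "is_metrized_tree G \<longleftrightarrow> wf_mgraph G \<and> connected_mg G \<and> acyclic_mg G"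

definition mdist :: "('a, 'e) mgraph \<Rightarrow> 'a \<Rightarrow> 'a \<Rightarrow> real" where
  "mdist G p q = Inf {sum_list (map (len G) es) | es. walk G p es q}"

definition wiener :: "('a, 'e) mgraph \<Rightarrow> real" where
  "wiener G = (1/2) * (\<Sum>p\<in>verts G. \<Sum>q\<in>verts G. mdist G p q)"

definition total_length :: "('a, 'e) mgraph \<Rightarrow> real" where
  "total_length G = (\<Sum>e\<in>edges G. len G e)"

definition contract :: "('a, 'e) mgraph \<Rightarrow> 'e \<Rightarrow> ('a, 'e) mgraph" where
  "contract G e =
     (let a = fst (ends G e); b = snd (ends G e); f = (\<lambda>x. if x = b then a else x) in
      \<lparr> verts = f ` verts G, edges = edges G - {e},
        ends = (\<lambda>d. map_prod f f (ends G d)), len = len G \<rparr>)"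

fun iter_wiener_sum :: "nat \<Rightarrow> ('a, 'e) mgraph \<Rightarrow> real" where
  "iter_wiener_sum 0 G = wiener G"
| "iter_wiener_sum (Suc k) G = (\<Sum>e\<in>edges G. iter_wiener_sum k (contract G e))"

end

theory Submission
  imports Defs
begin

text \<open>In a tree the distance of two vertices is the total length of the edges separating them, so
  \<open>W = \<Sum>\<^sub>e |A\<^sub>e| |B\<^sub>e| \<ell>\<^sub>e\<close>, where \<open>A\<^sub>e\<close> and \<open>B\<^sub>e\<close> are the two sides of \<open>e\<close>.
  Contracting an edge \<open>e\<close> deletes one of its endpoints, and this vertex lies on exactly one side of
  every other edge \<open>d\<close>; since the second endpoints of the edges other than \<open>d\<close> cover each side of
  \<open>d\<close> except for one vertex, summing the edge formula over all contractions yields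
  \<open>\<Sum>\<^sub>e W(\<Gamma>/e) = (v - 4) W + v \<ell>\<close>, while \<open>\<Sum>\<^sub>e \<ell>(\<Gamma>/e) = (v - 2) \<ell>\<close>.
  Iterating this affine recursion \<open>k\<close> times gives the iterated sum as
  \<open>(v-4)!/(v-4-k)! \<cdot> (W + c(v,k) \<ell>)\<close>, which is solved for \<open>W\<close>.\<close>

lemma wf_mgraph_ends_in_verts:
  "wf_mgraph G \<Longrightarrow> e \<in> edges G \<Longrightarrow> ends G e = (x, y) \<Longrightarrow> x \<in> verts G \<and> y \<in> verts G"
  unfolding wf_mgraph_def by (metis fst_conv snd_conv)

lemma walk_target_in_verts: "walk G p es q \<Longrightarrow> q \<in> verts G"
  by (induction rule: walk.induct) auto

lemma walk_source_in_verts: "wf_mgraph G \<Longrightarrow> walk G p es q \<Longrightarrow> p \<in> verts G"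
  by (erule walk.cases) (auto dest: wf_mgraph_ends_in_verts)

lemma walk_edges_subset: "walk G p es q \<Longrightarrow> set es \<subseteq> edges G"
  by (induction rule: walk.induct) auto

lemma walk_Nil_iff: "walk G p [] q \<longleftrightarrow> p = q \<and> p \<in> verts G"
  by (auto elim: walk.cases intro: walk.intros)

lemma walk_Cons_iff:
  "walk G p (e # es) q \<longleftrightarrow>
     e \<in> edges G \<and> (\<exists>r. (ends G e = (p, r) \<or> ends G e = (r, p)) \<and> walk G r es q)"
  by (auto elim: walk.cases intro: walk.intros)

lemma walk_single_iff:
  assumes "wf_mgraph G"
  shows "walk G p [e] q \<longleftrightarrow> e \<in> edges G \<and> (ends G e = (p, q) \<or> ends G e = (q, p))"
  using wf_mgraph_ends_in_verts[OF assms] by (auto simp: walk_Cons_iff walk_Nil_iff)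

lemma walk_append: "walk G p xs r \<Longrightarrow> walk G r ys q \<Longrightarrow> walk G p (xs @ ys) q"
  by (induction rule: walk.induct) (auto intro: walk.intros)

lemma walk_append_iff:
  assumes "wf_mgraph G"
  shows "walk G p (xs @ ys) q \<longleftrightarrow> (\<exists>r. walk G p xs r \<and> walk G r ys q)"
proof (induction xs arbitrary: p)
  case Nil
  show ?case using walk_source_in_verts[OF assms] by (auto simp: walk_Nil_iff)
next
  case (Cons x xs)
  then show ?case by (auto simp: walk_Cons_iff)
qed

lemma walk_rev:
  assumes "wf_mgraph G"
  shows "walk G p es q \<Longrightarrow> walk G q (rev es) p"
  by (induction rule: walk.induct)
    (auto simp: walk_append_iff[OF assms] walk_single_iff[OF assms] walk_Nil_iff)

lemma walk_distinct_subwalk: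
  assumes wf: "wf_mgraph G"
  shows "walk G p es q \<Longrightarrow> \<exists>es'. walk G p es' q \<and> distinct es' \<and> set es' \<subseteq> set es"
proof (induction "length es" arbitrary: es rule: less_induct)
  case less
  show ?case
  proof (cases "distinct es")
    case True
    then show ?thesis using less.prems by auto
  next
    case False
    then obtain xs ys zs y where es: "es = xs @ [y] @ ys @ [y] @ zs"
      using not_distinct_decomp by blast
    with less.prems obtain r1 r2 r3 r4 where
      "walk G p xs r1" "walk G r1 [y] r2" "walk G r3 [y] r4" "walk G r4 zs q"
      by (auto simp only: walk_append_iff[OF wf])
    moreover from this(2,3) have "r4 = r1 \<or> r4 = r2"
      by (auto simp: walk_single_iff[OF wf])
    ultimately obtain es2 where "walk G p es2 q" "set es2 \<subseteq> set es" "length es2 < length es"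
    proof (elim disjE)
      assume "r4 = r1"
      then have "walk G p (xs @ zs) q"
        using \<open>walk G p xs r1\<close> \<open>walk G r4 zs q\<close> walk_append_iff[OF wf] by blast
      then show ?thesis using that[of "xs @ zs"] es by auto
    next
      assume "r4 = r2"
      then have "walk G p (xs @ [y] @ zs) q"
        using \<open>walk G p xs r1\<close> \<open>walk G r1 [y] r2\<close> \<open>walk G r4 zs q\<close>
          walk_append_iff[OF wf] by blast
      then show ?thesis using that[of "xs @ [y] @ zs"] es by auto
    qed
    then show ?thesis using less.hyps by blast
  qed
qed

definition reachable_avoiding :: "('a, 'e) mgraph \<Rightarrow> 'e \<Rightarrow> 'a \<Rightarrow> 'a \<Rightarrow> bool" where
  "reachable_avoiding G e p q \<longleftrightarrow> (\<exists>ws. walk G p ws q \<and> e \<notin> set ws)"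

lemma reachable_avoiding_refl: "p \<in> verts G \<Longrightarrow> reachable_avoiding G e p p"
  unfolding reachable_avoiding_def by (auto intro: walk.intros)

lemma reachable_avoiding_sym:
  "wf_mgraph G \<Longrightarrow> reachable_avoiding G e p q \<Longrightarrow> reachable_avoiding G e q p"
  unfolding reachable_avoiding_def using walk_rev by fastforce

lemma reachable_avoiding_trans:
  "reachable_avoiding G e p q \<Longrightarrow> reachable_avoiding G e q r
   \<Longrightarrow> reachable_avoiding G e p r"
  unfolding reachable_avoiding_def using walk_append by fastforce

lemma reachable_avoiding_edge:
  "wf_mgraph G \<Longrightarrow> d \<in> edges G \<Longrightarrow> d \<noteq> e \<Longrightarrow> ends G d = (x, y) \<Longrightarrow> reachable_avoiding G e x y"
  unfolding reachable_avoiding_def by (metis walk_single_iff empty_iff empty_set set_ConsD)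

lemma acyclic_iff_bridges:
  assumes wf: "wf_mgraph G"
  shows "acyclic_mg G \<longleftrightarrow>
           (\<forall>d\<in>edges G. \<not> reachable_avoiding G d (fst (ends G d)) (snd (ends G d)))"
proof
  assume ac: "acyclic_mg G"
  show "\<forall>d\<in>edges G. \<not> reachable_avoiding G d (fst (ends G d)) (snd (ends G d))"
  proof (intro ballI notI)
    fix d assume d: "d \<in> edges G"
      and "reachable_avoiding G d (fst (ends G d)) (snd (ends G d))"
    then obtain ws where "walk G (fst (ends G d)) ws (snd (ends G d))" "d \<notin> set ws"
      unfolding reachable_avoiding_def by blast
    then obtain es where es: "walk G (fst (ends G d)) es (snd (ends G d))" "distinct es" "d \<notin> set es"
      using walk_distinct_subwalk[OF wf] by blast
    have "walk G (snd (ends G d)) [d] (fst (ends G d))"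
      using d by (simp add: walk_single_iff[OF wf])
    with es have "walk G (fst (ends G d)) (es @ [d]) (fst (ends G d))" "distinct (es @ [d])"
      by (auto simp: walk_append_iff[OF wf])
    with ac show False unfolding acyclic_mg_def by blast
  qed
next
  assume bridges: "\<forall>d\<in>edges G. \<not> reachable_avoiding G d (fst (ends G d)) (snd (ends G d))"
  show "acyclic_mg G" unfolding acyclic_mg_def
  proof
    assume "\<exists>p es. es \<noteq> [] \<and> distinct es \<and> walk G p es p"
    then obtain p d rest where "walk G p (d # rest) p" and dis: "distinct (d # rest)"
      by (metis list.exhaust)
    then obtain r where d: "d \<in> edges G" "ends G d = (p, r) \<or> ends G d = (r, p)"
      and "walk G r rest p"
      by (auto simp: walk_Cons_iff)
    with dis have "reachable_avoiding G d r p"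
      unfolding reachable_avoiding_def by auto
    with d bridges reachable_avoiding_sym[OF wf] show False by fastforce
  qed
qed

lemma tree_wf: "is_metrized_tree G \<Longrightarrow> wf_mgraph G"
  unfolding is_metrized_tree_def by auto

lemma tree_finite_verts: "is_metrized_tree G \<Longrightarrow> finite (verts G)"
  unfolding is_metrized_tree_def wf_mgraph_def by auto

lemma tree_finite_edges: "is_metrized_tree G \<Longrightarrow> finite (edges G)"
  unfolding is_metrized_tree_def wf_mgraph_def by auto

lemma tree_walk_exists:
  "is_metrized_tree G \<Longrightarrow> p \<in> verts G \<Longrightarrow> q \<in> verts G \<Longrightarrow> \<exists>es. walk G p es q"
  unfolding is_metrized_tree_def connected_mg_def by auto

lemma tree_bridge:
  "is_metrized_tree G \<Longrightarrow> d \<in> edges G \<Longrightarrow> ends G d = (x, y) \<Longrightarrow> \<not> reachable_avoiding G d x y"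
  unfolding is_metrized_tree_def using acyclic_iff_bridges by (metis fst_conv snd_conv)

lemma tree_no_loop: "is_metrized_tree G \<Longrightarrow> d \<in> edges G \<Longrightarrow> ends G d = (x, y) \<Longrightarrow> x \<noteq> y"
  by (metis tree_bridge reachable_avoiding_refl tree_wf wf_mgraph_ends_in_verts)

lemma walk_through_edge:
  assumes wf: "wf_mgraph G" and e: "ends G e = (a, b)"
  shows "walk G p ws q \<Longrightarrow> e \<in> set ws \<Longrightarrow> reachable_avoiding G e p a \<or> reachable_avoiding G e p b"
proof (induction ws arbitrary: p)
  case Nil
  then show ?case by simp
next
  case (Cons d ws)
  then obtain r where d: "d \<in> edges G" "ends G d = (p, r) \<or> ends G d = (r, p)"
    and w: "walk G r ws q"
    by (auto simp: walk_Cons_iff)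
  have p: "p \<in> verts G" using walk_source_in_verts[OF wf Cons.prems(1)] .
  show ?case
  proof (cases "d = e")
    case True
    with d e have "p = a \<or> p = b" by auto
    then show ?thesis using reachable_avoiding_refl[OF p] by blast
  next
    case False
    then have "reachable_avoiding G e p r"
      using d(2) reachable_avoiding_edge[OF wf d(1) False, of p r]
        reachable_avoiding_edge[OF wf d(1) False, of r p] reachable_avoiding_sym[OF wf, of e r p]
      by blast
    moreover have "reachable_avoiding G e r a \<or> reachable_avoiding G e r b"
      using Cons.IH[OF w] Cons.prems(2) False by simp
    ultimately show ?thesis
      using reachable_avoiding_trans[of G e p r] by blast
  qed
qed

lemma tree_reachable_endpoint:
  assumes T: "is_metrized_tree G" and e: "e \<in> edges G" "ends G e = (a, b)" and p: "p \<in> verts G"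
  shows "reachable_avoiding G e p a \<or> reachable_avoiding G e p b"
proof -
  have wf: "wf_mgraph G" using tree_wf[OF T] .
  obtain ws where w: "walk G p ws a"
    using tree_walk_exists[OF T p] wf_mgraph_ends_in_verts[OF wf e] by blast
  show ?thesis
  proof (cases "e \<in> set ws")
    case True
    then show ?thesis using walk_through_edge[OF wf e(2) w] by blast
  next
    case False
    then show ?thesis using w unfolding reachable_avoiding_def by blast
  qed
qed

text \<open>In a tree, removing an edge leaves exactly two classes, those of its endpoints.\<close>

lemma tree_reachable_avoiding_iff:
  assumes T: "is_metrized_tree G" and e: "e \<in> edges G" "ends G e = (a, b)"
    and p: "p \<in> verts G" and q: "q \<in> verts G"
  shows "reachable_avoiding G e p q \<longleftrightarrow> (reachable_avoiding G e p a \<longleftrightarrow> reachable_avoiding G e q a)"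
proof -
  have wf: "wf_mgraph G" using tree_wf[OF T] .
  note sym = reachable_avoiding_sym[OF wf] and trans = reachable_avoiding_trans
  have "\<not> reachable_avoiding G e a b" using tree_bridge[OF T e] .
  moreover have "reachable_avoiding G e p a \<or> reachable_avoiding G e p b"
    "reachable_avoiding G e q a \<or> reachable_avoiding G e q b"
    using tree_reachable_endpoint[OF T e] p q by auto
  ultimately show ?thesis by (metis sym trans)
qed

definition edge_side :: "('a, 'e) mgraph \<Rightarrow> 'e \<Rightarrow> 'a \<Rightarrow> 'a set" where
  "edge_side G e x = {p \<in> verts G. reachable_avoiding G e p x}"

abbreviation fst_side :: "('a, 'e) mgraph \<Rightarrow> 'e \<Rightarrow> 'a set" where
  "fst_side G d \<equiv> edge_side G d (fst (ends G d))"

abbreviation snd_side :: "('a, 'e) mgraph \<Rightarrow> 'e \<Rightarrow> 'a set" where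
  "snd_side G d \<equiv> edge_side G d (snd (ends G d))"

lemma edge_side_subset: "edge_side G e x \<subseteq> verts G"
  unfolding edge_side_def by auto

lemma tree_finite_edge_side: "is_metrized_tree G \<Longrightarrow> finite (edge_side G e x)"
  using tree_finite_verts edge_side_subset finite_subset by metis

lemma tree_edge_sides:
  assumes T: "is_metrized_tree G" and d: "d \<in> edges G"
  shows "fst_side G d \<inter> snd_side G d = {}" "fst_side G d \<union> snd_side G d = verts G"
proof -
  obtain a b where ab: "ends G d = (a, b)" by fastforce
  have wf: "wf_mgraph G" using tree_wf[OF T] .
  show "fst_side G d \<inter> snd_side G d = {}"
    unfolding edge_side_def ab
    by auto (metis tree_bridge[OF T d ab] reachable_avoiding_sym[OF wf] reachable_avoiding_trans)
  show "fst_side G d \<union> snd_side G d = verts G"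
    using tree_reachable_endpoint[OF T d ab] unfolding edge_side_def ab by auto
qed

lemma tree_card_edge_sides:
  assumes T: "is_metrized_tree G" and d: "d \<in> edges G"
  shows "card (fst_side G d) + card (snd_side G d) = card (verts G)"
  using card_Un_disjoint[of "fst_side G d" "snd_side G d"] tree_finite_edge_side[OF T]
    tree_edge_sides[OF T d] by simp

lemma tree_separates_iff:
  assumes T: "is_metrized_tree G" and d: "d \<in> edges G" and p: "p \<in> verts G" and q: "q \<in> verts G"
  shows "\<not> reachable_avoiding G d p q \<longleftrightarrow>
           (p \<in> fst_side G d \<and> q \<in> snd_side G d) \<or> (p \<in> snd_side G d \<and> q \<in> fst_side G d)"
proof -
  obtain a b where ab: "ends G d = (a, b)" by fastforce
  have "p \<in> snd_side G d \<longleftrightarrow> p \<notin> fst_side G d" "q \<in> snd_side G d \<longleftrightarrow> q \<notin> fst_side G d"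
    using tree_edge_sides[OF T d] p q by blast+
  then show ?thesis
    using tree_reachable_avoiding_iff[OF T d ab p q] p q unfolding edge_side_def ab by auto
qed

lemma tree_trail_edges:
  assumes T: "is_metrized_tree G" and w: "walk G p es q" and dist: "distinct es"
  shows "set es = {d \<in> edges G. \<not> reachable_avoiding G d p q}"
proof
  have wf: "wf_mgraph G" using tree_wf[OF T] .
  show "set es \<subseteq> {d \<in> edges G. \<not> reachable_avoiding G d p q}"
  proof
    fix d assume "d \<in> set es"
    then obtain xs ys where es: "es = xs @ [d] @ ys" by (metis split_list append_Cons append_Nil)
    with w obtain r1 r2 where "walk G p xs r1" "walk G r1 [d] r2" "walk G r2 ys q"
      by (auto simp only: walk_append_iff[OF wf])
    moreover have "d \<notin> set xs" "d \<notin> set ys" using dist es by auto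
    ultimately have d: "d \<in> edges G" "ends G d = (r1, r2) \<or> ends G d = (r2, r1)"
      and "reachable_avoiding G d r1 p" "reachable_avoiding G d q r2"
      unfolding reachable_avoiding_def
      by (auto simp: walk_single_iff[OF wf] dest: walk_rev[OF wf])
    then have "\<not> reachable_avoiding G d p q"
      using tree_bridge[OF T d(1)] reachable_avoiding_sym[OF wf] reachable_avoiding_trans by metis
    with d show "d \<in> {d \<in> edges G. \<not> reachable_avoiding G d p q}" by blast
  qed
  show "{d \<in> edges G. \<not> reachable_avoiding G d p q} \<subseteq> set es"
    using w unfolding reachable_avoiding_def by blast
qed

lemma sum_set_le_sum_list:
  fixes f :: "'a \<Rightarrow> real"
  assumes "\<And>x. x \<in> set xs \<Longrightarrow> f x \<ge> 0"
  shows "sum f (set xs) \<le> sum_list (map f xs)"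
  using assms
proof (induction xs)
  case (Cons x xs)
  have "sum f (set (x # xs)) \<le> f x + sum f (set xs)"
    using Cons.prems by (simp add: sum.insert_if)
  also have "\<dots> \<le> f x + sum_list (map f xs)"
    using Cons by simp
  finally show ?case by simp
qed simp

text \<open>Every walk from \<open>p\<close> to \<open>q\<close> crosses each separating edge, and a trail crosses no other edge.\<close>

lemma tree_mdist:
  assumes T: "is_metrized_tree G" and p: "p \<in> verts G" and q: "q \<in> verts G"
  shows "mdist G p q = (\<Sum>d\<in>{d \<in> edges G. \<not> reachable_avoiding G d p q}. len G d)"
proof -
  have wf: "wf_mgraph G" using tree_wf[OF T] .
  let ?S = "{d \<in> edges G. \<not> reachable_avoiding G d p q}"
  have len_nonneg: "d \<in> edges G \<Longrightarrow> len G d \<ge> 0" for d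
    using wf unfolding wf_mgraph_def by (auto intro: less_imp_le)
  obtain es where es: "walk G p es q" "distinct es"
    using tree_walk_exists[OF T p q] walk_distinct_subwalk[OF wf] by blast
  have "sum_list (map (len G) es) = sum (len G) ?S"
    using sum_list_distinct_conv_sum_set[OF es(2)] tree_trail_edges[OF T es] by simp
  moreover have "sum (len G) ?S \<le> sum_list (map (len G) xs)" if w: "walk G p xs q" for xs
  proof -
    have "set xs \<subseteq> edges G" using walk_edges_subset[OF w] .
    moreover have "?S \<subseteq> set xs" using w unfolding reachable_avoiding_def by auto
    ultimately have "sum (len G) ?S \<le> sum (len G) (set xs)"
      using len_nonneg by (intro sum_mono2) auto
    also have "\<dots> \<le> sum_list (map (len G) xs)"
      using \<open>set xs \<subseteq> edges G\<close> len_nonneg by (intro sum_set_le_sum_list) auto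
    finally show ?thesis .
  qed
  ultimately show ?thesis unfolding mdist_def
    by (intro cInf_eq_minimum) (use es(1) in force)+
qed

definition identify :: "'a \<Rightarrow> 'a \<Rightarrow> 'a \<Rightarrow> 'a" where
  "identify a b x = (if x = b then a else x)"

lemma contract_simps:
  assumes "ends G e = (a, b)"
  shows "verts (contract G e) = identify a b ` verts G"
    "edges (contract G e) = edges G - {e}"
    "ends (contract G e) = (\<lambda>d. map_prod (identify a b) (identify a b) (ends G d))"
    "len (contract G e) = len G"
  using assms unfolding contract_def identify_def by (simp_all add: Let_def)

locale tree_edge =
  fixes G :: "('a, 'e) mgraph" and e0 :: 'e and a0 b0 :: 'a
  assumes tree: "is_metrized_tree G" and e0: "e0 \<in> edges G" and ends_e0: "ends G e0 = (a0, b0)"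
begin

abbreviation "G' \<equiv> contract G e0"
abbreviation "f \<equiv> identify a0 b0"

lemma wf: "wf_mgraph G"
  using tree_wf[OF tree] .

lemma a0_in_verts: "a0 \<in> verts G" and b0_in_verts: "b0 \<in> verts G"
  using wf_mgraph_ends_in_verts[OF wf e0 ends_e0] by auto

lemma a0_ne_b0: "a0 \<noteq> b0"
  using tree_no_loop[OF tree e0 ends_e0] .

lemmas G'_simps = contract_simps[OF ends_e0]

lemma verts_contract: "verts G' = verts G - {b0}"
  using a0_in_verts a0_ne_b0 unfolding G'_simps identify_def by force

lemma identify_in_verts: "x \<in> verts G \<Longrightarrow> f x \<in> verts G'"
  unfolding G'_simps by blast

lemma walk_contract: "walk G p es q \<Longrightarrow> walk G' (f p) (filter (\<lambda>d. d \<noteq> e0) es) (f q)"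
proof (induction rule: walk.induct)
  case (walk_Nil p)
  then show ?case using identify_in_verts by (auto intro: walk.intros)
next
  case (walk_Cons1 d p r es q)
  then show ?case using ends_e0 by (auto simp: G'_simps identify_def intro!: walk.walk_Cons1)
next
  case (walk_Cons2 d r p es q)
  then show ?case using ends_e0 by (auto simp: G'_simps identify_def intro!: walk.walk_Cons2)
qed

lemma walk_identified:
  assumes "x \<in> verts G" "y \<in> verts G" "f x = f y"
  shows "\<exists>ws. walk G x ws y \<and> set ws \<subseteq> {e0}"
proof (cases "x = y")
  case True
  then show ?thesis using assms(1) by (auto intro: walk.intros)
next
  case False
  with assms(3) have "ends G e0 = (x, y) \<or> ends G e0 = (y, x)"
    using ends_e0 unfolding identify_def by (auto split: if_splits)
  then have "walk G x [e0] y" using e0 by (auto simp: walk_single_iff[OF wf])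
  then show ?thesis by fastforce
qed

lemma walk_lift:
  "walk G' p' es q' \<Longrightarrow> p \<in> verts G \<Longrightarrow> q \<in> verts G \<Longrightarrow> f p = p' \<Longrightarrow> f q = q'
   \<Longrightarrow> \<exists>ws. walk G p ws q \<and> set ws \<subseteq> insert e0 (set es)"
proof (induction es arbitrary: p p')
  case Nil
  then show ?case using walk_identified[of p q] by (auto simp: walk_Nil_iff)
next
  case (Cons d es)
  from Cons.prems(1) obtain r' where d: "d \<in> edges G" "d \<noteq> e0"
    and d': "ends G' d = (p', r') \<or> ends G' d = (r', p')" and w': "walk G' r' es q'"
    by (auto simp: walk_Cons_iff G'_simps)
  obtain x y where xy: "ends G d = (x, y)" by fastforce
  have "walk G x [d] y" "walk G y [d] x"
    using d(1) xy by (auto simp: walk_single_iff[OF wf])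
  moreover have "(f x = p' \<and> f y = r') \<or> (f y = p' \<and> f x = r')"
    using d' xy by (auto simp: G'_simps)
  ultimately obtain u w where uw: "walk G u [d] w" "f u = p'" "f w = r'"
    by blast
  have "u \<in> verts G" "w \<in> verts G"
    using walk_source_in_verts[OF wf uw(1)] walk_target_in_verts[OF uw(1)] .
  obtain w1 where w1: "walk G p w1 u" "set w1 \<subseteq> {e0}"
    using walk_identified[of p u] Cons.prems(2,4) uw(2) \<open>u \<in> verts G\<close> by metis
  obtain w2 where w2: "walk G w w2 q" "set w2 \<subseteq> insert e0 (set es)"
    using Cons.IH[OF w' \<open>w \<in> verts G\<close> Cons.prems(3) uw(3) Cons.prems(5)] by blast
  have "walk G p (w1 @ [d] @ w2) q"
    using w1(1) uw(1) w2(1) walk_append by metis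
  moreover have "set (w1 @ [d] @ w2) \<subseteq> insert e0 (set (d # es))"
    using w1(2) w2(2) by auto
  ultimately show ?case by blast
qed

lemma reachable_avoiding_contract:
  assumes "e \<noteq> e0" "p \<in> verts G" "q \<in> verts G"
  shows "reachable_avoiding G' e (f p) (f q) \<longleftrightarrow> reachable_avoiding G e p q"
proof
  assume "reachable_avoiding G' e (f p) (f q)"
  then obtain ws where "walk G' (f p) ws (f q)" "e \<notin> set ws"
    unfolding reachable_avoiding_def by blast
  with walk_lift assms show "reachable_avoiding G e p q"
    unfolding reachable_avoiding_def by blast
next
  assume "reachable_avoiding G e p q"
  then show "reachable_avoiding G' e (f p) (f q)"
    unfolding reachable_avoiding_def using walk_contract by fastforce
qed

lemma tree_contract: "is_metrized_tree G'"
proof -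
  have wf': "wf_mgraph G'"
    unfolding wf_mgraph_def
  proof (intro conjI ballI)
    show "finite (verts G')" "verts G' \<noteq> {}" "finite (edges G')"
      using wf unfolding wf_mgraph_def G'_simps by auto
    fix d assume "d \<in> edges G'"
    then have "d \<in> edges G" by (simp add: G'_simps)
    then show "fst (ends G' d) \<in> verts G'" "snd (ends G' d) \<in> verts G'" "len G' d > 0"
      using wf identify_in_verts unfolding wf_mgraph_def by (auto simp: G'_simps map_prod_def split_beta)
  qed
  have "connected_mg G'"
    unfolding connected_mg_def
  proof (intro ballI)
    fix p' q' assume "p' \<in> verts G'" "q' \<in> verts G'"
    then obtain p q where "p \<in> verts G" "q \<in> verts G" "p' = f p" "q' = f q"
      by (auto simp: G'_simps)
    then show "\<exists>es. walk G' p' es q'"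
      using tree_walk_exists[OF tree] walk_contract by blast
  qed
  moreover have "acyclic_mg G'"
    unfolding acyclic_iff_bridges[OF wf']
  proof
    fix d assume "d \<in> edges G'"
    then have d: "d \<in> edges G" "d \<noteq> e0" by (auto simp: G'_simps)
    obtain x y where xy: "ends G d = (x, y)" by fastforce
    have "\<not> reachable_avoiding G' d (f x) (f y)"
      using tree_bridge[OF tree d(1) xy] reachable_avoiding_contract[OF d(2)]
        wf_mgraph_ends_in_verts[OF wf d(1) xy] by blast
    then show "\<not> reachable_avoiding G' d (fst (ends G' d)) (snd (ends G' d))"
      using xy by (simp add: G'_simps)
  qed
  ultimately show ?thesis unfolding is_metrized_tree_def using wf' by blast
qed

lemma card_verts_contract: "card (verts G') = card (verts G) - 1"
  using verts_contract b0_in_verts tree_finite_verts[OF tree] by simp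

lemma total_length_contract: "total_length G' = total_length G - len G e0"
  using e0 tree_finite_edges[OF tree] unfolding total_length_def G'_simps by (simp add: sum_diff1)

lemma edge_side_contract:
  assumes "e \<in> edges G" "e \<noteq> e0" "x \<in> verts G"
  shows "edge_side G' e (f x) = edge_side G e x - {b0}"
proof -
  have "reachable_avoiding G' e p (f x) \<longleftrightarrow> reachable_avoiding G e p x" if "p \<in> verts G - {b0}" for p
    using reachable_avoiding_contract[OF assms(2) _ assms(3), of p] that
    unfolding identify_def by auto
  then show ?thesis unfolding edge_side_def verts_contract by auto
qed

lemma ends_same_edge_side:
  assumes "e \<in> edges G" "e \<noteq> e0"
  shows "a0 \<in> edge_side G e x \<longleftrightarrow> b0 \<in> edge_side G e x"
proof -
  have "reachable_avoiding G e a0 b0" "reachable_avoiding G e b0 a0"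
    using reachable_avoiding_edge[OF wf e0 assms(2)[symmetric] ends_e0]
      reachable_avoiding_sym[OF wf] by blast+
  then show ?thesis
    using reachable_avoiding_trans[of G e a0 b0 x] reachable_avoiding_trans[of G e b0 a0 x]
      a0_in_verts b0_in_verts
    unfolding edge_side_def by blast
qed

lemma identify_in_edge_side_iff:
  assumes "e \<in> edges G" "e \<noteq> e0"
  shows "f y \<in> edge_side G e x - {b0} \<longleftrightarrow> y \<in> edge_side G e x"
  using ends_same_edge_side[OF assms] a0_ne_b0 unfolding identify_def by auto

end

lemma card_remove_corresponding:
  assumes "finite A" "finite B" "a \<in> A \<longleftrightarrow> b \<in> B" "card (A - {a}) + 1 = card (B - {b})"
  shows "card A + 1 = card B"
proof (cases "a \<in> A")
  case True
  then have "b \<in> B" using assms(3) by simp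
  then show ?thesis
    using True assms(4) card_Suc_Diff1[OF assms(1) True] card_Suc_Diff1[OF assms(2)] by simp
next
  case False
  then have "b \<notin> B" using assms(3) by simp
  then show ?thesis using False assms(4) by simp
qed

lemma edge_side_eq_singleton:
  assumes "edges G - {e} = {}" and x: "x \<in> verts G"
  shows "edge_side G e x = {x}"
proof
  show "edge_side G e x \<subseteq> {x}"
  proof
    fix p assume "p \<in> edge_side G e x"
    then obtain ws where w: "walk G p ws x" "e \<notin> set ws"
      unfolding edge_side_def reachable_avoiding_def by blast
    have "set ws \<subseteq> {e}" using walk_edges_subset[OF w(1)] assms(1) by blast
    with w(2) have "ws = []" by (cases ws) auto
    with w(1) show "p \<in> {x}" by (simp add: walk_Nil_iff)
  qed
  show "{x} \<subseteq> edge_side G e x"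
    using x reachable_avoiding_refl[OF x] unfolding edge_side_def by simp
qed

definition edges_into :: "('a, 'e) mgraph \<Rightarrow> 'e \<Rightarrow> 'a set \<Rightarrow> 'e set" where
  "edges_into G e X = {d \<in> edges G - {e}. snd (ends G d) \<in> X}"

text \<open>Contracting another edge removes one vertex from the side exactly when that edge points into it.\<close>

lemma card_edges_into_edge_side:
  "is_metrized_tree G \<Longrightarrow> e \<in> edges G \<Longrightarrow> x = fst (ends G e) \<or> x = snd (ends G e) \<Longrightarrow>
   card (edges_into G e (edge_side G e x)) + 1 = card (edge_side G e x)"
  unfolding edges_into_def
proof (induction "card (edges G)" arbitrary: G x rule: less_induct)
  case less
  have T: "is_metrized_tree G" and e: "e \<in> edges G" using less.prems by auto
  have wf: "wf_mgraph G" using tree_wf[OF T] .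
  have x: "x \<in> verts G"
    using less.prems(3) wf_mgraph_ends_in_verts[OF wf e] by (cases "ends G e") auto
  let ?S = "{d \<in> edges G - {e}. snd (ends G d) \<in> edge_side G e x}"
  show ?case
  proof (cases "edges G - {e} = {}")
    case True
    have "card (edge_side G e x) = 1"
      using edge_side_eq_singleton[OF True x] by simp
    moreover have "?S = {}" using True by blast
    then have "card ?S = 0" by (simp only: card.empty)
    ultimately show ?thesis by linarith
  next
    case False
    then obtain e0 where e0_edge: "e0 \<in> edges G" and e0_ne_e: "e0 \<noteq> e" by blast
    obtain a0 b0 where ab: "ends G e0 = (a0, b0)" by fastforce
    interpret tree_edge G e0 a0 b0 using T e0_edge ab by unfold_locales
    have IH: "card {d \<in> edges G' - {e}. snd (ends G' d) \<in> edge_side G' e (f x)} + 1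
        = card (edge_side G' e (f x))"
    proof (rule less.hyps)
      show "card (edges G') < card (edges G)"
        using card_Diff1_less[OF tree_finite_edges[OF T] e0_edge] by (simp add: G'_simps)
      show "is_metrized_tree G'" by (rule tree_contract)
      show "e \<in> edges G'" using e e0_ne_e by (simp add: G'_simps)
      show "f x = fst (ends G' e) \<or> f x = snd (ends G' e)"
        using less.prems(3) by (auto simp: G'_simps)
    qed
    have side: "edge_side G' e (f x) = edge_side G e x - {b0}"
      using edge_side_contract[OF e e0_ne_e[symmetric] x] .
    have "{d \<in> edges G' - {e}. snd (ends G' d) \<in> edge_side G' e (f x)} = ?S - {e0}"
      using identify_in_edge_side_iff[OF e e0_ne_e[symmetric]]
      unfolding side by (auto simp: G'_simps map_prod_def split_beta)
    with IH side have IH': "card (?S - {e0}) + 1 = card (edge_side G e x - {b0})" by simp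
    have e0_in_S: "e0 \<in> ?S \<longleftrightarrow> b0 \<in> edge_side G e x" using ab e0_edge e0_ne_e by auto
    show ?thesis
      using card_remove_corresponding[OF _ tree_finite_edge_side[OF T] e0_in_S IH']
        tree_finite_edges[OF T] by simp
  qed
qed

lemma tree_edges_into_sides:
  assumes T: "is_metrized_tree G" and d: "d \<in> edges G"
  shows "edges_into G d (fst_side G d) \<union> edges_into G d (snd_side G d) = edges G - {d}"
    "edges_into G d (fst_side G d) \<inter> edges_into G d (snd_side G d) = {}"
proof -
  have "snd (ends G e) \<in> verts G" if "e \<in> edges G" for e
    using that wf_mgraph_ends_in_verts[OF tree_wf[OF T], of e "fst (ends G e)"] by simp
  then show "edges_into G d (fst_side G d) \<union> edges_into G d (snd_side G d) = edges G - {d}"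
    "edges_into G d (fst_side G d) \<inter> edges_into G d (snd_side G d) = {}"
    using tree_edge_sides[OF T d] unfolding edges_into_def by blast+
qed

lemma tree_card_edges:
  assumes T: "is_metrized_tree G" and "edges G \<noteq> {}"
  shows "card (edges G) + 1 = card (verts G)"
proof -
  obtain d where d: "d \<in> edges G" using assms(2) by blast
  have "card (edges G - {d}) = card (edges_into G d (fst_side G d)) + card (edges_into G d (snd_side G d))"
    using card_Un_disjoint[of "edges_into G d (fst_side G d)" "edges_into G d (snd_side G d)"]
      tree_edges_into_sides[OF T d] tree_finite_edges[OF T]
    by (simp add: edges_into_def)
  moreover have "card (edges G - {d}) + 1 = card (edges G)"
    using card_Suc_Diff1[OF tree_finite_edges[OF T] d] by simp
  ultimately show ?thesis
    using card_edges_into_edge_side[OF T d, of "fst (ends G d)"]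
      card_edges_into_edge_side[OF T d, of "snd (ends G d)"] tree_card_edge_sides[OF T d] by simp
qed

lemma tree_card_separated_pairs:
  assumes T: "is_metrized_tree G" and d: "d \<in> edges G"
  shows "card {(p, q) \<in> verts G \<times> verts G. \<not> reachable_avoiding G d p q}
         = 2 * card (fst_side G d) * card (snd_side G d)"
proof -
  have "{(p, q) \<in> verts G \<times> verts G. \<not> reachable_avoiding G d p q}
        = fst_side G d \<times> snd_side G d \<union> snd_side G d \<times> fst_side G d" (is "?L = ?R")
  proof (intro equalityI subsetI)
    fix pq assume "pq \<in> ?L"
    then show "pq \<in> ?R" using tree_separates_iff[OF T d, of "fst pq" "snd pq"] by auto
  next
    fix pq assume "pq \<in> ?R"
    moreover from this have "fst pq \<in> verts G" "snd pq \<in> verts G"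
      using edge_side_subset[of G d "fst (ends G d)"] edge_side_subset[of G d "snd (ends G d)"] by auto
    ultimately show "pq \<in> ?L" using tree_separates_iff[OF T d, of "fst pq" "snd pq"] by auto
  qed
  moreover have "(fst_side G d \<times> snd_side G d) \<inter> (snd_side G d \<times> fst_side G d) = {}"
    using tree_edge_sides(1)[OF T d] by blast
  ultimately show ?thesis
    using tree_finite_edge_side[OF T]
    by (simp add: card_Un_disjoint card_cartesian_product)
qed

lemma tree_wiener:
  assumes T: "is_metrized_tree G"
  shows "wiener G = (\<Sum>d\<in>edges G. real (card (fst_side G d)) * real (card (snd_side G d)) * len G d)"
proof -
  let ?V = "verts G \<times> verts G"
  have finite: "finite ?V" "finite (edges G)"
    using tree_finite_verts[OF T] tree_finite_edges[OF T] by auto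
  have "wiener G = 1/2 * (\<Sum>(p, q)\<in>?V. mdist G p q)"
    unfolding wiener_def sum.cartesian_product ..
  also have "\<dots> = 1/2 * (\<Sum>(p, q)\<in>?V. \<Sum>d\<in>edges G. if \<not> reachable_avoiding G d p q then len G d else 0)"
    using tree_mdist[OF T] by (auto simp: sum.inter_filter[OF finite(2)] intro!: sum.cong)
  also have "\<dots> = 1/2 * (\<Sum>d\<in>edges G. \<Sum>pq\<in>?V. if \<not> reachable_avoiding G d (fst pq) (snd pq) then len G d else 0)"
    by (subst sum.swap) (simp add: split_beta)
  also have "\<dots> = 1/2 * (\<Sum>d\<in>edges G. real (card {(p, q) \<in> ?V. \<not> reachable_avoiding G d p q}) * len G d)"
  proof -
    have "{pq \<in> ?V. \<not> reachable_avoiding G d (fst pq) (snd pq)}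
          = {(p, q) \<in> ?V. \<not> reachable_avoiding G d p q}" for d
      by auto
    then show ?thesis by (simp add: sum.inter_filter[OF finite(1), symmetric])
  qed
  also have "\<dots> = (\<Sum>d\<in>edges G. real (card (fst_side G d)) * real (card (snd_side G d)) * len G d)"
    unfolding sum_distrib_left
    by (intro sum.cong refl) (subst tree_card_separated_pairs[OF T], simp_all)
  finally show ?thesis .
qed

lemma (in tree_edge) wiener_contract:
  "wiener G' = (\<Sum>d\<in>edges G - {e0}.
     real (card (fst_side G d - {b0})) * real (card (snd_side G d - {b0})) * len G d)"
proof -
  have "edge_side G' d (fst (ends G' d)) = fst_side G d - {b0}"
       "edge_side G' d (snd (ends G' d)) = snd_side G d - {b0}" if d: "d \<in> edges G - {e0}" for d
  proof -
    have "fst (ends G d) \<in> verts G" "snd (ends G d) \<in> verts G"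
      using d wf_mgraph_ends_in_verts[OF wf, of d "fst (ends G d)" "snd (ends G d)"] by auto
    then show "edge_side G' d (fst (ends G' d)) = fst_side G d - {b0}"
       "edge_side G' d (snd (ends G' d)) = snd_side G d - {b0}"
      using d edge_side_contract[of d] by (simp_all add: G'_simps)
  qed
  then show ?thesis
    unfolding tree_wiener[OF tree_contract] by (simp add: G'_simps)
qed

lemma tree_sum_card_sides_remove_head:
  assumes T: "is_metrized_tree G" and d: "d \<in> edges G"
  defines "a \<equiv> real (card (fst_side G d))" and "b \<equiv> real (card (snd_side G d))"
  shows "(\<Sum>e\<in>edges G - {d}. real (card (fst_side G d - {snd (ends G e)}))
                             * real (card (snd_side G d - {snd (ends G e)})))
         = (a - 1)^2 * b + a * (b - 1)^2"
proof -
  let ?h = "\<lambda>e. snd (ends G e)"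
  let ?SA = "edges_into G d (fst_side G d)" and ?SB = "edges_into G d (snd_side G d)"
  let ?t = "\<lambda>e. real (card (fst_side G d - {?h e})) * real (card (snd_side G d - {?h e}))"
  have finite: "finite ?SA" "finite ?SB"
    using tree_finite_edges[OF T] by (simp_all add: edges_into_def)
  have card_SA: "real (card ?SA) = a - 1" and card_SB: "real (card ?SB) = b - 1"
    using card_edges_into_edge_side[OF T d, of "fst (ends G d)"]
      card_edges_into_edge_side[OF T d, of "snd (ends G d)"]
    unfolding a_def b_def by (simp_all flip: of_nat_Suc)
  have "?t e = (a - 1) * b" if "e \<in> ?SA" for e
  proof -
    have "?h e \<in> fst_side G d" "?h e \<notin> snd_side G d"
      using that tree_edge_sides(1)[OF T d] by (auto simp: edges_into_def)
    moreover from this have "card (fst_side G d) \<ge> 1"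
      using tree_finite_edge_side[OF T] by (metis One_nat_def Suc_leI card_gt_0_iff empty_iff)
    ultimately show ?thesis
      unfolding a_def b_def by (simp add: card_Diff_singleton of_nat_diff)
  qed
  moreover have "?t e = a * (b - 1)" if "e \<in> ?SB" for e
  proof -
    have "?h e \<in> snd_side G d" "?h e \<notin> fst_side G d"
      using that tree_edge_sides(1)[OF T d] by (auto simp: edges_into_def)
    moreover from this have "card (snd_side G d) \<ge> 1"
      using tree_finite_edge_side[OF T] by (metis One_nat_def Suc_leI card_gt_0_iff empty_iff)
    ultimately show ?thesis
      unfolding a_def b_def by (simp add: card_Diff_singleton of_nat_diff)
  qed
  ultimately have "(\<Sum>e\<in>?SA \<union> ?SB. ?t e) = real (card ?SA) * ((a - 1) * b) + real (card ?SB) * (a * (b - 1))"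
    using finite tree_edges_into_sides(2)[OF T d] by (simp add: sum.union_disjoint)
  then show ?thesis
    unfolding tree_edges_into_sides(1)[OF T d] card_SA card_SB by (simp add: power2_eq_square)
qed

lemma tree_sum_wiener_contract:
  assumes T: "is_metrized_tree G"
  shows "(\<Sum>e\<in>edges G. wiener (contract G e))
         = (real (card (verts G)) - 4) * wiener G + real (card (verts G)) * total_length G"
proof -
  let ?v = "real (card (verts G))"
  let ?a = "\<lambda>d. real (card (fst_side G d))" and ?b = "\<lambda>d. real (card (snd_side G d))"
  let ?c = "\<lambda>d e. real (card (fst_side G d - {snd (ends G e)}))
                  * real (card (snd_side G d - {snd (ends G e)})) * len G d"
  have finite: "finite (edges G)" using tree_finite_edges[OF T] .
  have "wiener (contract G e) = (\<Sum>d\<in>edges G - {e}. ?c d e)" if "e \<in> edges G" for e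
  proof -
    obtain a0 b0 where "ends G e = (a0, b0)" by fastforce
    then interpret tree_edge G e a0 b0 using T that by unfold_locales
    show ?thesis using wiener_contract ends_e0 by simp
  qed
  then have "(\<Sum>e\<in>edges G. wiener (contract G e)) = (\<Sum>e\<in>edges G. \<Sum>d\<in>edges G - {e}. ?c d e)"
    by simp
  also have "\<dots> = (\<Sum>d\<in>edges G. \<Sum>e\<in>edges G - {d}. ?c d e)"
    using sum.swap_restrict[OF finite finite, of "\<lambda>e d. ?c d e" "\<lambda>e d. d \<noteq> e"]
    by (simp add: set_diff_eq conj_commute eq_commute)
  also have "\<dots> = (\<Sum>d\<in>edges G. ((?a d - 1)^2 * ?b d + ?a d * (?b d - 1)^2) * len G d)"
    by (intro sum.cong refl)
      (simp add: sum_distrib_right[symmetric] tree_sum_card_sides_remove_head[OF T])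
  also have "\<dots> = (\<Sum>d\<in>edges G. (?v - 4) * (?a d * ?b d * len G d) + ?v * len G d)"
  proof (intro sum.cong refl)
    fix d assume "d \<in> edges G"
    then have "?a d + ?b d = ?v"
      using tree_card_edge_sides[OF T] by (metis of_nat_add)
    then show "((?a d - 1)^2 * ?b d + ?a d * (?b d - 1)^2) * len G d
               = (?v - 4) * (?a d * ?b d * len G d) + ?v * len G d"
      by (simp add: power2_eq_square algebra_simps flip: \<open>?a d + ?b d = ?v\<close>)
  qed
  also have "\<dots> = (?v - 4) * wiener G + ?v * total_length G"
    unfolding tree_wiener[OF T] total_length_def by (simp add: sum.distrib sum_distrib_left)
  finally show ?thesis .
qed

lemma tree_sum_total_length_contract:
  assumes T: "is_metrized_tree G"
  shows "(\<Sum>e\<in>edges G. total_length (contract G e))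
         = (real (card (verts G)) - 2) * total_length G"
proof (cases "edges G = {}")
  case True
  then show ?thesis by (simp add: total_length_def)
next
  case False
  have "total_length (contract G e) = total_length G - len G e" if "e \<in> edges G" for e
  proof -
    obtain a0 b0 where "ends G e = (a0, b0)" by fastforce
    then interpret tree_edge G e a0 b0 using T that by unfold_locales
    show ?thesis by (rule total_length_contract)
  qed
  then have "(\<Sum>e\<in>edges G. total_length (contract G e)) = (\<Sum>e\<in>edges G. total_length G - len G e)"
    by (rule sum.cong[OF refl])
  also have "\<dots> = (real (card (edges G)) - 1) * total_length G"
    by (simp add: sum_subtractf total_length_def algebra_simps)
  also have "real (card (edges G)) = real (card (verts G)) - 1"
    using tree_card_edges[OF T False] by (simp flip: of_nat_Suc)
  finally show ?thesis by (simp add: algebra_simps)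
qed

definition wiener_length_coeff :: "nat \<Rightarrow> nat \<Rightarrow> real" where
  "wiener_length_coeff v k =
     ((real v)^2 - (real k + 2) * real v + real k - 1) * real k
       / ((real v - real k - 2) * (real v - real k - 3))"

lemma wiener_length_coeff_Suc:
  assumes "k + 5 \<le> v"
  shows "(real v - 4) * wiener_length_coeff v (Suc k)
         = real v + (real v - 2) * wiener_length_coeff (v - 1) k"
proof -
  define x y where "x = real v" and "y = real k"
  define D where "D = (x - y - 3) * (x - y - 4)"
  have "D \<noteq> 0" using assms unfolding D_def x_def y_def by auto
  have denominators: "(x - (1 + y) - 2) * (x - (1 + y) - 3) = D" "(x - 1 - y - 2) * (x - 1 - y - 3) = D"
    by (simp_all add: D_def algebra_simps)
  have "(x - 4) * ((x^2 - ((1 + y) + 2) * x + (1 + y) - 1) * (1 + y) / ((x - (1 + y) - 2) * (x - (1 + y) - 3)))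
        = x + (x - 2) * (((x - 1)^2 - (y + 2) * (x - 1) + y - 1) * y / ((x - 1 - y - 2) * (x - 1 - y - 3)))"
    unfolding denominators using \<open>D \<noteq> 0\<close>
    by (simp add: field_simps) (simp add: D_def algebra_simps power2_eq_square)
  moreover have "real (v - 1) = real v - 1" using assms by simp
  ultimately show ?thesis
    unfolding wiener_length_coeff_def of_nat_Suc x_def[symmetric] y_def[symmetric] by simp
qed

lemma wiener_length_coeff_diff_4:
  "4 \<le> v \<Longrightarrow> wiener_length_coeff v (v - 4) = (3 * real v - 5) * (real v - 4) / 2"
  by (simp add: wiener_length_coeff_def of_nat_diff power2_eq_square algebra_simps)

lemma iter_wiener_sum_tree:
  assumes "is_metrized_tree G" and "k + 4 \<le> card (verts G)"
  shows "iter_wiener_sum k G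
         = real (fact (card (verts G) - 4)) / real (fact (card (verts G) - 4 - k))
           * (wiener G + wiener_length_coeff (card (verts G)) k * total_length G)"
  using assms
proof (induction k arbitrary: G)
  case 0
  then show ?case by (simp add: wiener_length_coeff_def)
next
  case (Suc k)
  let ?v = "card (verts G)"
  define F where "F = real (fact (?v - 5)) / real (fact (?v - 5 - k))"
  let ?c = "wiener_length_coeff (?v - 1) k"
  have k5: "k + 5 \<le> ?v" using Suc.prems(2) by simp
  have contract: "iter_wiener_sum k (contract G e)
        = F * (wiener (contract G e) + ?c * total_length (contract G e))" if "e \<in> edges G" for e
  proof -
    obtain a0 b0 where "ends G e = (a0, b0)" by fastforce
    then interpret tree_edge G e a0 b0 using Suc.prems(1) that by unfold_locales
    show ?thesis
      using Suc.IH[OF tree_contract] Suc.prems(2) card_verts_contract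
    unfolding F_def by (simp add: numeral_eq_Suc)
  qed
  have "iter_wiener_sum (Suc k) G
        = (\<Sum>e\<in>edges G. F * (wiener (contract G e) + ?c * total_length (contract G e)))"
    unfolding iter_wiener_sum.simps by (rule sum.cong[OF refl contract])
  also have "\<dots> = F * ((\<Sum>e\<in>edges G. wiener (contract G e))
                          + ?c * (\<Sum>e\<in>edges G. total_length (contract G e)))"
    by (simp only: sum_distrib_left sum.distrib distrib_left mult.assoc)
  also have "\<dots> = F * ((real ?v - 4) * wiener G
                          + (real ?v + (real ?v - 2) * ?c) * total_length G)"
    by (simp add: tree_sum_wiener_contract[OF Suc.prems(1)]
        tree_sum_total_length_contract[OF Suc.prems(1)] algebra_simps)
  also have "\<dots> = F * (real ?v - 4) * (wiener G + wiener_length_coeff ?v (Suc k) * total_length G)"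
    unfolding wiener_length_coeff_Suc[OF k5, symmetric] by (simp add: algebra_simps)
  also have "F * (real ?v - 4) = real (fact (?v - 4)) / real (fact (?v - 4 - Suc k))"
  proof -
    have "?v - 4 = Suc (?v - 5)" "?v - 4 - Suc k = ?v - 5 - k" using k5 by auto
    then show ?thesis unfolding F_def by (simp add: of_nat_diff algebra_simps)
  qed
  finally show ?case .
qed

lemma wiener_eq_iter_wiener_sum:
  assumes "is_metrized_tree G" and "k + 4 \<le> card (verts G)"
  shows "wiener G = real (fact (card (verts G) - 4 - k)) / real (fact (card (verts G) - 4))
                      * iter_wiener_sum k G
                    - wiener_length_coeff (card (verts G)) k * total_length G"
  unfolding iter_wiener_sum_tree[OF assms] by simp

theorem theorem4p4:
  fixes G :: "('a, 'e) mgraph" and v k :: nat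
  assumes "is_metrized_tree G"
    and "v = card (verts G)"
    and "v \<ge> 5"
    and "1 \<le> k" and "k \<le> v - 4"
  shows "wiener G =
           real (fact (v - 4 - k)) / real (fact (v - 4)) * iter_wiener_sum k G
           - ((real v)^2 - (real k + 2) * real v + real k - 1) * real k
               / ((real v - real k - 2) * (real v - real k - 3)) * total_length G
      \<and> wiener G =
           1 / real (fact (v - 4)) * iter_wiener_sum (v - 4) G
           - (3 * real v - 5) * (real v - 4) / 2 * total_length G"
proof
  show "wiener G =
           real (fact (v - 4 - k)) / real (fact (v - 4)) * iter_wiener_sum k G
           - ((real v)^2 - (real k + 2) * real v + real k - 1) * real k
               / ((real v - real k - 2) * (real v - real k - 3)) * total_length G"
    using wiener_eq_iter_wiener_sum[OF assms(1), of k] assms(2,3,5)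
    unfolding wiener_length_coeff_def by simp
  show "wiener G =
           1 / real (fact (v - 4)) * iter_wiener_sum (v - 4) G
           - (3 * real v - 5) * (real v - 4) / 2 * total_length G"
    using wiener_eq_iter_wiener_sum[OF assms(1), of "v - 4"] wiener_length_coeff_diff_4[of v] assms(2,3)
    by simp
qed

end
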